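(* Let $r,m,n$ be nonnegative integers. There is a bijection between (A) the set of pairs of partitions $(\alpha,\beta)$ with $\alpha$ nonempty, $|\alpha|+|\beta|=n$, every part of $\beta$ at most $\alpha_1$, $l(\alpha)-l(\beta)=m$, and exactly $r$ balanced parts (i.e. $b(\alpha,\beta)=r$), and (B) the set of strict shifted pairs of partitions $(\bar\alpha,\bar\beta)$ with $|\bar\alpha|+|\bar\beta|=n$ and $l(\bar\alpha)-l(\bar\beta)=m+2r$. The bijection sends $(\alpha,\beta)$ to the pair where $\bar\alpha$ is the partition formed by all parts of $\alpha$ together with all balanced parts of $\beta$, and $\bar\beta$ is formed by the unbalanced parts of $\beta$.
   Context: A partition is a finite nonincreasing sequence $\lambda=(\lambda_1,\dots,\lambda_r)$ of positive integers (possibly empty); $l(\lambda)=r$, $|\lambda|=\sum\lambda_i$, $\lambda_1$ the largest part. A pair of partitions $(\alpha,\beta)$ is strict shifted if $l(\alpha)>l(\beta)$ and $\alpha_{i+1}>\beta_i$ for $1\le i\le l(\beta)$. Balanced parts: let $(\gamma,\delta)$ be a pair of partitions, with the convention $\gamma_j=0$ for $j>l(\gamma)$. The parts $\delta_1,\dots,\delta_{l(\delta)}$ are classified recursively in increasing order of index: $\delta_i$ is balanced if and only if $\gamma_{i+1}\le\delta_i$ and the number of indices $j$ with $2\le j\le l(\gamma)$ and $\gamma_j>\delta_i$ equals the number of indices $j<i$ for which $\delta_j$ is unbalanced; otherwise $\delta_i$ is unbalanced. $b(\gamma,\delta)$ denotes the number of balanced parts of $\delta$. *)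

theory Defs
  imports Main
begin

definition is_partition :: "nat list \<Rightarrow> bool" where
  "is_partition lam \<longleftrightarrow> sorted_wrt (\<ge>) lam \<and> (\<forall>x\<in>set lam. 0 < x)"

text \<open>1-indexed part with the convention gamma_j = 0 for j > l(gamma).\<close>
definition part :: "nat list \<Rightarrow> nat \<Rightarrow> nat" where
  "part g j = (if 1 \<le> j \<and> j \<le> length g then g ! (j - 1) else 0)"

definition strict_shifted :: "nat list \<Rightarrow> nat list \<Rightarrow> bool" where
  "strict_shifted a b \<longleftrightarrow> length a > length b \<and>
     (\<forall>i. 1 \<le> i \<and> i \<le> length b \<longrightarrow> part a (i + 1) > part b i)"

text \<open>balflags g ds i u: classification of the remaining parts ds of delta, where the
  first of them has (1-based) index i and u is the number of unbalanced parts with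
  smaller index. True = balanced.\<close>
fun balflags :: "nat list \<Rightarrow> nat list \<Rightarrow> nat \<Rightarrow> nat \<Rightarrow> bool list" where
  "balflags g [] i u = []"
| "balflags g (d # ds) i u =
     (let bal = (part g (i + 1) \<le> d \<and>
                 card {j. 2 \<le> j \<and> j \<le> length g \<and> part g j > d} = u)
      in bal # balflags g ds (i + 1) (if bal then u else Suc u))"

definition balanced_flags :: "nat list \<Rightarrow> nat list \<Rightarrow> bool list" where
  "balanced_flags g d = balflags g d 1 0"

definition balanced_parts :: "nat list \<Rightarrow> nat list \<Rightarrow> nat list" where
  "balanced_parts g d = map fst (filter snd (zip d (balanced_flags g d)))"

definition unbalanced_parts :: "nat list \<Rightarrow> nat list \<Rightarrow> nat list" where
  "unbalanced_parts g d = map fst (filter (\<lambda>p. \<not> snd p) (zip d (balanced_flags g d)))"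

definition num_balanced :: "nat list \<Rightarrow> nat list \<Rightarrow> nat" where
  "num_balanced g d = length (balanced_parts g d)"

definition setA :: "nat \<Rightarrow> nat \<Rightarrow> nat \<Rightarrow> (nat list \<times> nat list) set" where
  "setA r m n = {(a, b). is_partition a \<and> is_partition b \<and> a \<noteq> [] \<and>
      sum_list a + sum_list b = n \<and> (\<forall>x\<in>set b. x \<le> hd a) \<and>
      length a = length b + m \<and> num_balanced a b = r}"

definition setB :: "nat \<Rightarrow> nat \<Rightarrow> nat \<Rightarrow> (nat list \<times> nat list) set" where
  "setB r m n = {(a, b). is_partition a \<and> is_partition b \<and> strict_shifted a b \<and>
      sum_list a + sum_list b = n \<and> length a = length b + m + 2 * r}"

definition bal_map :: "nat list \<times> nat list \<Rightarrow> nat list \<times> nat list" where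
  "bal_map p = (rev (sort (fst p @ balanced_parts (fst p) (snd p))),
                unbalanced_parts (fst p) (snd p))"

end

(*
  Let N be the largest part of alpha, and a v, b v the multiplicities of v among
  alpha_2, alpha_3, ... and in beta.  For a nonincreasing beta the recursive balancing
  rule is a greedy marking (balflags_eq_greedy_flags): a part d is balanced iff the
  number of alpha_j > d (j >= 2) equals the current number of unbalanced parts.
  Processing the values N, N-1, ..., 1 in turn, a gap h evolves as
  h' = (h - b v) + a v and f v = b v - h copies of v are balanced
  (count_marked_greedy_flags).  Rewritten in terms of the image multiplicities
  A = a + f and B = b - f this is a "level chain" starting from gap 0 at the top.
  Level chains are unique given their bottom gap, can be built upwards from any bottom
  gap, and close at the top exactly when the counting condition shift_dominates holds,
  which is equivalent to strict shiftedness (strict_shifted_iff_dominates).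
*)

theory Submission
  imports Defs "HOL-Library.Multiset"
begin

(* In a nonincreasing list, an upward-closed property holds exactly on an initial
   segment; so it holds at position k iff more than k entries satisfy it. *)
lemma sorted_desc_nth_iff:
  fixes xs :: "'a::linorder list"
  assumes sorted: "sorted_wrt (\<ge>) xs" and k: "k < length xs"
    and up: "\<And>x y. y \<le> x \<Longrightarrow> P y \<Longrightarrow> P x"
  shows "P (xs ! k) \<longleftrightarrow> k < length (filter P xs)"
proof -
  define S where "S = {i. i < length xs \<and> P (xs ! i)}"
  have len: "length (filter P xs) = card S"
    unfolding S_def by (simp add: length_filter_conv_card)
  have down: "P (xs ! j)" if "P (xs ! i)" "j \<le> i" "i < length xs" for i j
  proof (cases "j = i")
    case False
    then have "xs ! i \<le> xs ! j" using sorted_wrt_nth_less[OF sorted, of j i] that by simp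
    then show ?thesis using up that(1) by blast
  qed (use that in simp)
  show ?thesis
  proof
    assume "P (xs ! k)"
    then have "{0..k} \<subseteq> S" unfolding S_def using down k by auto
    then have "card {0..k} \<le> card S" by (rule card_mono[rotated]) (simp add: S_def)
    then show "k < length (filter P xs)" using len by simp
  next
    assume lt: "k < length (filter P xs)"
    show "P (xs ! k)"
    proof (rule ccontr)
      assume "\<not> P (xs ! k)"
      then have "S \<subseteq> {0..<k}"
        unfolding S_def using down[of _ k] by (auto simp: not_le[symmetric])
      then have "card S \<le> k" using card_mono[of "{0..<k}" S] by simp
      then show False using lt len by simp
    qed
  qed
qed

lemma sorted_desc_eq_if_mset_eq:
  fixes xs ys :: "'a::linorder list"
  assumes "sorted_wrt (\<ge>) xs" "sorted_wrt (\<ge>) ys" "mset xs = mset ys"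
  shows "xs = ys"
proof -
  have "sorted (rev xs)" "sorted (rev ys)" using assms(1,2) by (simp_all add: sorted_wrt_rev)
  moreover have "mset (rev ys) = mset (rev xs)" using assms(3) by simp
  ultimately have "rev ys = rev xs" using properties_for_sort by metis
  then show ?thesis by simp
qed

lemma length_filter_le_eq_sum_count:
  assumes "\<forall>z\<in>set xs. 0 < (z::nat)"
  shows "length (filter (\<lambda>z. z \<le> v) xs) = (\<Sum>w\<in>{1..v}. count (mset xs) w)"
  using assms
proof (induction xs)
  case (Cons x xs)
  have "(\<Sum>w\<in>{1..v}. count (mset (x # xs)) w)
      = (\<Sum>w\<in>{1..v}. count (mset xs) w + (if x = w then 1 else 0))"
    by (intro sum.cong) auto
  also have "\<dots> = (\<Sum>w\<in>{1..v}. count (mset xs) w) + (if x \<in> {1..v} then 1 else 0)"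
    by (simp add: sum.distrib)
  finally show ?case using Cons by auto
qed simp

lemma length_eq_sum_count:
  assumes "set xs \<subseteq> {1..(N::nat)}"
  shows "length xs = (\<Sum>w\<in>{1..N}. count (mset xs) w)"
proof -
  have "filter (\<lambda>z. z \<le> N) xs = xs" using assms by (intro filter_True) auto
  moreover have "\<forall>z\<in>set xs. 0 < z" using assms by auto
  ultimately show ?thesis using length_filter_le_eq_sum_count[of xs N] by simp
qed

lemma count_outside_range:
  "set xs \<subseteq> {1..(N::nat)} \<Longrightarrow> \<not> (1 \<le> v \<and> v \<le> N) \<Longrightarrow> count (mset xs) v = 0"
  by (auto simp: count_eq_zero_iff)

lemma sorted_desc_eq_if_counts_eq:
  fixes xs ys :: "nat list"
  assumes "sorted_wrt (\<ge>) xs" "sorted_wrt (\<ge>) ys"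
    and "set xs \<subseteq> {1..N}" "set ys \<subseteq> {1..N}"
    and "\<And>v. 1 \<le> v \<Longrightarrow> v \<le> N \<Longrightarrow> count (mset xs) v = count (mset ys) v"
  shows "xs = ys"
proof (rule sorted_desc_eq_if_mset_eq[OF assms(1,2)], rule multiset_eqI)
  show "count (mset xs) v = count (mset ys) v" for v
    using assms(5)[of v] count_outside_range[OF assms(3), of v] count_outside_range[OF assms(4), of v]
    by (cases "1 \<le> v \<and> v \<le> N") (simp_all only: simp_thms)
qed

fun desc_of_counts :: "(nat \<Rightarrow> nat) \<Rightarrow> nat \<Rightarrow> nat list" where
  "desc_of_counts c 0 = []"
| "desc_of_counts c (Suc N) = replicate (c (Suc N)) (Suc N) @ desc_of_counts c N"

lemma set_desc_of_counts: "set (desc_of_counts c N) \<subseteq> {1..N}"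
  by (induction N) auto

lemma sorted_desc_of_counts: "sorted_wrt (\<ge>) (desc_of_counts c N)"
proof (induction N)
  case (Suc N)
  have "\<forall>y\<in>set (desc_of_counts c N). y \<le> Suc N" using set_desc_of_counts[of c N] by auto
  moreover have "sorted_wrt (\<ge>) (replicate k (Suc N))" for k by (induction k) auto
  ultimately show ?case using Suc by (auto simp: sorted_wrt_append)
qed simp

lemma desc_of_counts_cong:
  "(\<And>v. 1 \<le> v \<Longrightarrow> v \<le> N \<Longrightarrow> c v = c' v) \<Longrightarrow> desc_of_counts c N = desc_of_counts c' N"
  by (induction N) auto

lemma count_desc_of_counts:
  "count (mset (desc_of_counts c N)) v = (if 1 \<le> v \<and> v \<le> N then c v else 0)"
  by (induction N) auto

lemma sum_list_eq_if_mset_eq: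
  "mset xs + mset ys = mset xs' + mset ys' \<Longrightarrow>
   sum_list xs + sum_list ys = sum_list xs' + sum_list (ys' :: nat list)"
  by (metis sum_mset_sum_list sum_mset.union)

definition marked :: "'a list \<Rightarrow> bool list \<Rightarrow> 'a list" where
  "marked xs fs = map fst (filter snd (zip xs fs))"

definition unmarked :: "'a list \<Rightarrow> bool list \<Rightarrow> 'a list" where
  "unmarked xs fs = map fst (filter (\<lambda>p. \<not> snd p) (zip xs fs))"

lemma marked_append:
  "length xs = length fs \<Longrightarrow> marked (xs @ ys) (fs @ gs) = marked xs fs @ marked ys gs"
  by (simp add: marked_def)

lemma marked_replicate:
  "length fs = k \<Longrightarrow> marked (replicate k d) fs = replicate (length (filter (\<lambda>x. x) fs)) d"
proof (induction k arbitrary: fs)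
  case (Suc k)
  then obtain f fs' where "fs = f # fs'" "length fs' = k" by (cases fs) auto
  then show ?case using Suc.IH by (cases f) (simp_all add: marked_def)
qed (simp add: marked_def)

lemma mset_marked_unmarked:
  "length xs = length fs \<Longrightarrow> mset (marked xs fs) + mset (unmarked xs fs) = mset xs"
proof (induction xs arbitrary: fs)
  case (Cons x xs)
  then obtain f fs' where "fs = f # fs'" "length fs' = length xs" by (cases fs) auto
  then show ?case using Cons.IH by (cases f) (simp_all add: marked_def unmarked_def)
qed (simp add: marked_def unmarked_def)

lemma set_marked: "set (marked xs fs) \<subseteq> set xs"
  by (auto simp: marked_def dest: set_zip_leftD)

lemma set_unmarked: "set (unmarked xs fs) \<subseteq> set xs"
  by (auto simp: unmarked_def dest: set_zip_leftD)

lemma sorted_unmarked: "sorted_wrt R xs \<Longrightarrow> sorted_wrt R (unmarked xs fs)"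
proof (induction xs arbitrary: fs)
  case (Cons x xs)
  show ?case
  proof (cases fs)
    case (Cons f fs')
    have "\<forall>y\<in>set (unmarked xs fs'). R x y" using Cons.prems set_unmarked[of xs fs'] by auto
    then show ?thesis using Cons.IH Cons.prems \<open>fs = f # fs'\<close> by (cases f) (simp_all add: unmarked_def)
  qed (simp add: unmarked_def)
qed (simp add: unmarked_def)

(* The greedy marking that the balancing rule reduces to on a nonincreasing beta:
   d is marked iff c d <= u, where u counts the unmarked entries seen so far. *)
fun greedy_flags :: "('a \<Rightarrow> nat) \<Rightarrow> 'a list \<Rightarrow> nat \<Rightarrow> bool list" where
  "greedy_flags c [] u = []"
| "greedy_flags c (d # ds) u = (c d \<le> u) # greedy_flags c ds (if c d \<le> u then u else Suc u)"

fun greedy_counter :: "('a \<Rightarrow> nat) \<Rightarrow> 'a list \<Rightarrow> nat \<Rightarrow> nat" where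
  "greedy_counter c [] u = u"
| "greedy_counter c (d # ds) u = greedy_counter c ds (if c d \<le> u then u else Suc u)"

lemma length_greedy_flags [simp]: "length (greedy_flags c ds u) = length ds"
  by (induction ds arbitrary: u) auto

lemma greedy_flags_append:
  "greedy_flags c (xs @ ys) u = greedy_flags c xs u @ greedy_flags c ys (greedy_counter c xs u)"
  by (induction xs arbitrary: u) auto

lemma greedy_flags_replicate:
  assumes "u \<le> c d"
  shows "length (filter (\<lambda>x. x) (greedy_flags c (replicate k d) u)) = k - (c d - u)"
    and "greedy_counter c (replicate k d) u = u + min k (c d - u)"
proof -
  have "length (filter (\<lambda>x. x) (greedy_flags c (replicate k d) u)) = k - (c d - u)
     \<and> greedy_counter c (replicate k d) u = u + min k (c d - u)"
    using assms
  proof (induction k arbitrary: u)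
    case (Suc k)
    show ?case
    proof (cases "c d \<le> u")
      case True
      then have cu: "c d = u" using Suc.prems by simp
      have "greedy_flags c (replicate j d) u = replicate j True" for j
        using cu by (induction j) auto
      moreover have "greedy_counter c (replicate j d) u = u" for j
        using cu by (induction j) auto
      ultimately show ?thesis using cu by simp
    next
      case False
      then show ?thesis using Suc.IH[of "Suc u"] by simp
    qed
  qed simp
  then show "length (filter (\<lambda>x. x) (greedy_flags c (replicate k d) u)) = k - (c d - u)"
    and "greedy_counter c (replicate k d) u = u + min k (c d - u)" by simp_all
qed

lemma split_largest_value:
  assumes "sorted_wrt (\<ge>) ds" "set ds \<subseteq> {1..Suc N}"
  shows "ds = replicate (count (mset ds) (Suc N)) (Suc N) @ filter (\<lambda>x. x < Suc N) ds"
  using assms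
proof (induction ds)
  case (Cons x xs)
  show ?case
  proof (cases "x = Suc N")
    case False
    then have "\<forall>y\<in>set (x # xs). y < Suc N" using Cons.prems by fastforce
    then have "filter (\<lambda>x. x < Suc N) (x # xs) = x # xs" "count (mset (x # xs)) (Suc N) = 0"
      by (auto simp: count_eq_zero_iff)
    then show ?thesis by simp
  qed (use Cons in simp)
qed simp

(* Values v = N, N-1, ..., 1 are processed from the top with a gap
   h (how far the counter u lags behind c v).  Of the b v copies of v, exactly
   b v - h are marked (level_bal); the gap passed down to v - 1 is
   (h - b v) + a v (level_gap records the gap entering each level). *)
fun level_bal :: "(nat \<Rightarrow> nat) \<Rightarrow> (nat \<Rightarrow> nat) \<Rightarrow> nat \<Rightarrow> nat \<Rightarrow> nat \<Rightarrow> nat" where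
  "level_bal a b 0 h = (\<lambda>v. 0)"
| "level_bal a b (Suc N) h =
     (level_bal a b N ((h - b (Suc N)) + a (Suc N))) (Suc N := b (Suc N) - h)"

fun level_gap :: "(nat \<Rightarrow> nat) \<Rightarrow> (nat \<Rightarrow> nat) \<Rightarrow> nat \<Rightarrow> nat \<Rightarrow> nat \<Rightarrow> nat" where
  "level_gap a b 0 h = (\<lambda>v. h)"
| "level_gap a b (Suc N) h = (level_gap a b N ((h - b (Suc N)) + a (Suc N))) (Suc N := h)"

lemma level_bal_outside: "v = 0 \<or> N < v \<Longrightarrow> level_bal a b N h v = 0"
  by (induction N arbitrary: h) auto

lemma level_gap_top: "level_gap a b N h N = h"
  by (cases N) auto

lemma level_bal_cong:
  "(\<And>v. 1 \<le> v \<Longrightarrow> v \<le> N \<Longrightarrow> a v = a' v \<and> b v = b' v) \<Longrightarrow> level_bal a b N h = level_bal a' b' N h"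
  by (induction N arbitrary: h) auto

theorem count_marked_greedy_flags:
  fixes N :: nat
  assumes c: "\<forall>v < N. c v = c (Suc v) + a (Suc v)"
    and sorted: "sorted_wrt (\<ge>) ds" and range: "set ds \<subseteq> {1..N}" and u: "u \<le> c N"
    and b: "\<And>v. 1 \<le> v \<Longrightarrow> v \<le> N \<Longrightarrow> count (mset ds) v = b v"
  shows "count (mset (marked ds (greedy_flags c ds u))) v = level_bal a b N (c N - u) v"
  using assms
proof (induction N arbitrary: ds u v)
  case 0
  then have "ds = []" by auto
  then show ?case by (simp add: marked_def)
next
  case (Suc N)
  define k where "k = count (mset ds) (Suc N)"
  define ds' where "ds' = filter (\<lambda>x. x < Suc N) ds"
  define h where "h = c (Suc N) - u"
  define u' where "u' = u + min k h"
  have kb: "k = b (Suc N)" using Suc.prems(5) k_def by simp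
  have ds_split: "ds = replicate k (Suc N) @ ds'"
    unfolding k_def ds'_def by (rule split_largest_value[OF Suc.prems(2,3)])
  note top = greedy_flags_replicate[of u c "Suc N" k, OF Suc.prems(4), folded h_def u'_def]
  have marked_split: "marked ds (greedy_flags c ds u)
      = replicate (k - h) (Suc N) @ marked ds' (greedy_flags c ds' u')"
  proof -
    let ?top = "replicate k (Suc N)"
    have "marked ds (greedy_flags c ds u)
        = marked (?top @ ds') (greedy_flags c ?top u @ greedy_flags c ds' u')"
      using ds_split greedy_flags_append[of c ?top ds' u] top(2) by simp
    also have "\<dots> = marked ?top (greedy_flags c ?top u) @ marked ds' (greedy_flags c ds' u')"
      by (rule marked_append) simp
    also have "marked ?top (greedy_flags c ?top u) = replicate (k - h) (Suc N)"
      using marked_replicate[of "greedy_flags c ?top u" k "Suc N"] top(1) by simp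
    finally show ?thesis .
  qed
  have cN: "c N = c (Suc N) + a (Suc N)" using Suc.prems(1) by simp
  have IH: "count (mset (marked ds' (greedy_flags c ds' u'))) w = level_bal a b N (c N - u') w" for w
  proof (rule Suc.IH)
    show "sorted_wrt (\<ge>) ds'" unfolding ds'_def using Suc.prems(2) by (simp add: sorted_wrt_filter)
    show "set ds' \<subseteq> {1..N}" unfolding ds'_def using Suc.prems(3) by auto
    show "u' \<le> c N" unfolding u'_def h_def using Suc.prems(4) cN by simp
  qed (use Suc.prems in \<open>auto simp: ds'_def\<close>)
  have gap: "c N - u' = (h - b (Suc N)) + a (Suc N)"
    unfolding u'_def h_def using cN kb Suc.prems(4) by simp
  show ?case
  proof (cases "v = Suc N")
    case True
    then show ?thesis using marked_split kb h_def IH[of v] level_bal_outside[of v N a b] by simp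
  next
    case False
    then show ?thesis using marked_split IH[of v] gap h_def by simp
  qed
qed

(* One level of the recursion, expressed through the image multiplicities
   A = a + f and B = b - f: either some copies are balanced (f > 0), in which case
   exactly g_in copies stay unbalanced, or none is, and the gap just moves. *)
definition level_step :: "nat \<Rightarrow> nat \<Rightarrow> nat \<Rightarrow> nat \<Rightarrow> nat \<Rightarrow> bool" where
  "level_step A B f g_in g_out \<longleftrightarrow>
     (0 < f \<and> g_in = B \<and> g_out + f = A) \<or> (f = 0 \<and> B \<le> g_in \<and> g_out + B = g_in + A)"

definition level_chain :: "(nat \<Rightarrow> nat) \<Rightarrow> (nat \<Rightarrow> nat) \<Rightarrow> (nat \<Rightarrow> nat) \<Rightarrow> (nat \<Rightarrow> nat) \<Rightarrow> nat \<Rightarrow> bool" where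
  "level_chain A B f g N \<longleftrightarrow> (\<forall>v. 1 \<le> v \<and> v \<le> N \<longrightarrow> level_step (A v) (B v) (f v) (g v) (g (v - 1)))"

lemma level_chain_Suc:
  "level_chain A B f g N \<Longrightarrow> Suc v \<le> N \<Longrightarrow>
   level_step (A (Suc v)) (B (Suc v)) (f (Suc v)) (g (Suc v)) (g v)"
  unfolding level_chain_def by (drule spec[of _ "Suc v"]) simp

lemma level_chain_level_bal:
  "level_chain (\<lambda>v. a v + level_bal a b N h v) (\<lambda>v. b v - level_bal a b N h v)
     (level_bal a b N h) (level_gap a b N h) N"
  unfolding level_chain_def
proof (induction N arbitrary: h)
  case (Suc N)
  show ?case
  proof (intro allI impI)
    fix v assume v: "1 \<le> v \<and> v \<le> Suc N"
    show "level_step (a v + level_bal a b (Suc N) h v) (b v - level_bal a b (Suc N) h v)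
        (level_bal a b (Suc N) h v) (level_gap a b (Suc N) h v) (level_gap a b (Suc N) h (v - 1))"
    proof (cases "v = Suc N")
      case True
      then show ?thesis by (auto simp: level_gap_top level_step_def)
    next
      case False
      then have "v \<le> N" "v - 1 \<noteq> Suc N" using v by auto
      then show ?thesis using Suc.IH[of "(h - b (Suc N)) + a (Suc N)"] v False by simp
    qed
  qed
qed simp

lemma level_chain_sum:
  assumes "level_chain A B f g N" "k \<le> N"
  shows "g k + (\<Sum>w\<in>{1..k}. A w) = g 0 + (\<Sum>w\<in>{1..k}. B w) + (\<Sum>w\<in>{1..k}. f w)"
  using assms(2)
proof (induction k)
  case (Suc k)
  then show ?case using level_chain_Suc[OF assms(1) Suc.prems] by (auto simp: level_step_def)
qed simp

(* For given A and B, a level chain is determined by its bottom gap g 0; this is what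
   makes bal_map injective. *)
lemma level_chain_unique:
  assumes ch1: "level_chain A B f1 g1 N" and ch2: "level_chain A B f2 g2 N"
    and bottom: "g1 0 = g2 0" and v: "1 \<le> v" "v \<le> N"
  shows "f1 v = f2 v"
proof -
  have g: "g1 k = g2 k" if "k \<le> N" for k
    using that
  proof (induction k)
    case (Suc k)
    then show ?case using level_chain_Suc[OF ch1 Suc.prems] level_chain_Suc[OF ch2 Suc.prems]
      by (auto simp: level_step_def)
  qed (rule bottom)
  obtain w where w: "v = Suc w" using v by (cases v) auto
  show ?thesis using level_chain_Suc[OF ch1, of w] level_chain_Suc[OF ch2, of w] g[of w] v w
    by (auto simp: level_step_def)
qed

(* Building a level chain upwards from an arbitrary bottom gap h0; this produces the
   preimage in the surjectivity proof. *)
primrec gap_up :: "(nat \<Rightarrow> nat) \<Rightarrow> (nat \<Rightarrow> nat) \<Rightarrow> nat \<Rightarrow> nat \<Rightarrow> nat" where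
  "gap_up A B h0 0 = h0"
| "gap_up A B h0 (Suc v) =
     (if gap_up A B h0 v < A (Suc v) then B (Suc v) else gap_up A B h0 v + B (Suc v) - A (Suc v))"

definition bal_up :: "(nat \<Rightarrow> nat) \<Rightarrow> (nat \<Rightarrow> nat) \<Rightarrow> nat \<Rightarrow> nat \<Rightarrow> nat" where
  "bal_up A B h0 v =
     (if v = 0 then 0 else if gap_up A B h0 (v - 1) < A v then A v - gap_up A B h0 (v - 1) else 0)"

lemma level_chain_gap_up: "level_chain A B (bal_up A B h0) (gap_up A B h0) N"
  unfolding level_chain_def
proof (intro allI impI)
  fix v assume "1 \<le> v \<and> v \<le> N"
  then obtain w where v: "v = Suc w" by (cases v) auto
  show "level_step (A v) (B v) (bal_up A B h0 v) (gap_up A B h0 v) (gap_up A B h0 (v - 1))"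
    unfolding v level_step_def bal_up_def by auto
qed

lemma level_chain_level_bal_eq:
  assumes "level_chain A B f g N" "1 \<le> v" "v \<le> N"
  shows "level_bal (\<lambda>v. A v - f v) (\<lambda>v. B v + f v) N (g N) v = f v"
  using assms
proof (induction N)
  case (Suc N)
  have "level_step (A (Suc N)) (B (Suc N)) (f (Suc N)) (g (Suc N)) (g N)"
    using level_chain_Suc[OF Suc.prems(1)] by simp
  then have below: "(g (Suc N) - (B (Suc N) + f (Suc N))) + (A (Suc N) - f (Suc N)) = g N"
    and top: "(B (Suc N) + f (Suc N)) - g (Suc N) = f (Suc N)"
    unfolding level_step_def by auto
  have "level_chain A B f g N" using Suc.prems(1) unfolding level_chain_def by simp
  then show ?case using Suc.IH Suc.prems(2,3) below top by (cases "v = Suc N") simp_all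
qed simp

(* The counting form of strict shiftedness: for every v, the number of parts of B
   that are >= v is at most the number of parts of A that exceed v. *)
definition shift_dominates :: "(nat \<Rightarrow> nat) \<Rightarrow> (nat \<Rightarrow> nat) \<Rightarrow> nat \<Rightarrow> bool" where
  "shift_dominates A B N \<longleftrightarrow> (\<forall>v. 1 \<le> v \<and> v \<le> N \<longrightarrow>
     (\<Sum>w\<in>{1..v}. A w) + (\<Sum>w\<in>{1..N}. B w) \<le> (\<Sum>w\<in>{1..N}. A w) + (\<Sum>w\<in>{1..v-1}. B w))"

lemma level_chain_dominates:
  assumes ch: "level_chain A B f g N" and top: "g N = 0"
  shows "shift_dominates A B N"
  unfolding shift_dominates_def
proof (intro allI impI)
  fix v assume v: "1 \<le> v \<and> v \<le> N"
  then obtain u where u: "v = Suc u" by (cases v) auto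
  have "B v \<le> g v" using level_chain_Suc[OF ch, of u] u v by (auto simp: level_step_def)
  moreover have "(\<Sum>w\<in>{1..v}. B w) = (\<Sum>w\<in>{1..v-1}. B w) + B v" unfolding u by simp
  moreover have "(\<Sum>w\<in>{1..v}. f w) \<le> (\<Sum>w\<in>{1..N}. f w)" using v by (intro sum_mono2) auto
  moreover have "(\<Sum>w\<in>{1..v-1}. B w) \<le> (\<Sum>w\<in>{1..N}. B w)" using v by (intro sum_mono2) auto
  ultimately show "(\<Sum>w\<in>{1..v}. A w) + (\<Sum>w\<in>{1..N}. B w) \<le> (\<Sum>w\<in>{1..N}. A w) + (\<Sum>w\<in>{1..v-1}. B w)"
    using level_chain_sum[OF ch, of v] level_chain_sum[OF ch le_refl] v top by linarith
qed

lemma level_chain_closes: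
  assumes ch: "level_chain A B f g N" and dom: "shift_dominates A B N"
    and total: "g 0 + (\<Sum>w\<in>{1..N}. B w) + r = (\<Sum>w\<in>{1..N}. A w)"
  shows "(\<Sum>w\<in>{1..N}. f w) = r" and "g N = 0"
proof -
  have partial: "(\<Sum>w\<in>{1..v}. f w) \<le> r" if "v \<le> N" for v
    using that
  proof (induction v)
    case (Suc w)
    show ?case
    proof (cases "f (Suc w) = 0")
      case False
      then have "g (Suc w) = B (Suc w)"
        using level_chain_Suc[OF ch Suc.prems] by (auto simp: level_step_def)
      moreover have "(\<Sum>w\<in>{1..Suc w}. A w) + (\<Sum>w\<in>{1..N}. B w) \<le> (\<Sum>w\<in>{1..N}. A w) + (\<Sum>w\<in>{1..w}. B w)"
        using dom Suc.prems unfolding shift_dominates_def by (metis diff_Suc_1 le_add1 plus_1_eq_Suc)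
      moreover have "(\<Sum>w\<in>{1..Suc w}. B w) = (\<Sum>w\<in>{1..w}. B w) + B (Suc w)" by simp
      ultimately show ?thesis using level_chain_sum[OF ch Suc.prems] total by linarith
    qed (use Suc in simp)
  qed simp
  show "(\<Sum>w\<in>{1..N}. f w) = r" and "g N = 0"
    using level_chain_sum[OF ch le_refl] partial[OF le_refl] total by linarith+
qed

lemma part_nth: "1 \<le> j \<Longrightarrow> j \<le> length g \<Longrightarrow> part g j = g ! (j - 1)"
  unfolding Defs.part_def by simp

lemma part_pos: "0 < part g j \<Longrightarrow> 1 \<le> j \<and> j \<le> length g \<and> part g j = g ! (j - 1)"
  unfolding Defs.part_def by (auto split: if_splits)

definition count_above :: "nat list \<Rightarrow> nat \<Rightarrow> nat" where
  "count_above g x = length (filter (\<lambda>y. x < y) (tl g))"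

lemma count_above_antimono: "x \<le> y \<Longrightarrow> count_above g y \<le> count_above g x"
proof -
  assume "x \<le> y"
  then have "length (filter (\<lambda>z. y < z) xs) \<le> length (filter (\<lambda>z. x < z) xs)" for xs :: "nat list"
    by (induction xs) auto
  then show ?thesis unfolding count_above_def .
qed

lemma count_above_Suc:
  "count_above g v = count_above g (Suc v) + count (mset (tl g)) (Suc v)"
proof -
  have "length (filter (\<lambda>y. v < y) xs)
      = length (filter (\<lambda>y. Suc v < y) xs) + count (mset xs) (Suc v)" for xs
    by (induction xs) auto
  then show ?thesis unfolding count_above_def .
qed

lemma card_larger_parts:
  "card {j. 2 \<le> j \<and> j \<le> length g \<and> part g j > d} = count_above g d"
proof -
  have "{j. 2 \<le> j \<and> j \<le> length g \<and> part g j > d}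
      = (\<lambda>i. i + 2) ` {i. i < length (tl g) \<and> d < tl g ! i}"
  proof (rule set_eqI, rule iffI)
    fix j assume "j \<in> {j. 2 \<le> j \<and> j \<le> length g \<and> part g j > d}"
    then have j: "2 \<le> j" "j \<le> length g" "d < g ! (j - 1)" by (auto simp: part_nth)
    moreover have "tl g ! (j - 2) = g ! (j - 1)"
      using j by (simp add: nth_tl Suc_diff_Suc numeral_2_eq_2)
    ultimately have "j - 2 \<in> {i. i < length (tl g) \<and> d < tl g ! i}" "j = (j - 2) + 2" by auto
    then show "j \<in> (\<lambda>i. i + 2) ` {i. i < length (tl g) \<and> d < tl g ! i}" by blast
  next
    fix j assume "j \<in> (\<lambda>i. i + 2) ` {i. i < length (tl g) \<and> d < tl g ! i}"
    then obtain i where i: "j = i + 2" "i < length (tl g)" "d < tl g ! i" by auto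
    then show "j \<in> {j. 2 \<le> j \<and> j \<le> length g \<and> part g j > d}"
      by (auto simp: Defs.part_def nth_tl)
  qed
  moreover have "inj_on (\<lambda>i::nat. i + 2) A" for A by (simp add: inj_on_def)
  ultimately show ?thesis by (simp add: card_image count_above_def length_filter_conv_card)
qed

(* The invariant u <= count_above g d
   makes the condition gamma_(i+1) <= delta_i automatic for balanced parts. *)
lemma balflags_eq_greedy_flags:
  assumes g: "sorted_wrt (\<ge>) g"
    and "sorted_wrt (\<ge>) ds" "u < i" "\<forall>d\<in>set ds. u \<le> count_above g d"
  shows "balflags g ds i u = greedy_flags (count_above g) ds u"
  using assms(2-)
proof (induction ds arbitrary: i u)
  case (Cons d ds)
  have ud: "u \<le> count_above g d" using Cons.prems(3) by simp
  have no_blocking: "part g (i + 1) \<le> d" if cu: "count_above g d = u"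
  proof (rule ccontr)
    assume "\<not> part g (i + 1) \<le> d"
    then have pd: "d < part g (i + 1)" by simp
    then have il: "i + 1 \<le> length g" and "part g (i + 1) = g ! i"
      using part_pos[of g "i + 1"] by auto
    moreover have "tl g ! (i - 1) = g ! i" using Cons.prems(2) il by (simp add: nth_tl)
    ultimately have "d < tl g ! (i - 1)" using pd by simp
    moreover have "i - 1 < length (tl g)" using il Cons.prems(2) by simp
    moreover have "sorted_wrt (\<ge>) (tl g)" using g by (cases g) auto
    ultimately have "i - 1 < count_above g d"
      unfolding count_above_def using sorted_desc_nth_iff[of "tl g" "i - 1" "\<lambda>y. d < y"] by auto
    then show False using cu Cons.prems(2) by simp
  qed
  have bal_iff: "(part g (i + 1) \<le> d \<and> card {j. 2 \<le> j \<and> j \<le> length g \<and> part g j > d} = u)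
      = (count_above g d \<le> u)"
    using no_blocking ud card_larger_parts[of g d] by auto
  define u' where "u' = (if count_above g d \<le> u then u else Suc u)"
  have "u' \<le> count_above g d'" if "d' \<in> set ds" for d'
  proof -
    have "count_above g d \<le> count_above g d'"
      using Cons.prems(1) that by (simp add: count_above_antimono)
    then show ?thesis unfolding u'_def using Cons.prems(3) that by auto
  qed
  then have "balflags g ds (i + 1) u' = greedy_flags (count_above g) ds u'"
    using Cons.IH Cons.prems(1,2) unfolding u'_def by auto
  then show ?case using bal_iff unfolding u'_def by (simp add: Let_def)
qed simp

lemma partition_facts:
  assumes "is_partition al" "al \<noteq> []"
  shows "al = hd al # tl al" "sorted_wrt (\<ge>) (tl al)" "set (tl al) \<subseteq> {1..hd al}"
    "\<forall>z\<in>set al. 1 \<le> z \<and> z \<le> hd al"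
proof -
  show al: "al = hd al # tl al" using assms(2) by simp
  have sorted: "sorted_wrt (\<ge>) (hd al # tl al)" and pos: "\<forall>z\<in>set al. 0 < z"
    using assms(1) al unfolding is_partition_def by (metis, simp)
  then show "sorted_wrt (\<ge>) (tl al)" by simp
  have "\<forall>z\<in>set al. z \<le> hd al" using sorted al by (metis order_refl set_ConsD sorted_wrt.simps(2))
  then show "\<forall>z\<in>set al. 1 \<le> z \<and> z \<le> hd al" using pos by (simp add: Suc_le_eq)
  then show "set (tl al) \<subseteq> {1..hd al}" using al by (metis atLeastAtMost_iff list.set_intros(2) subsetI)
qed

lemma partition_range:
  "is_partition be \<Longrightarrow> \<forall>z\<in>set be. z \<le> N \<Longrightarrow> set be \<subseteq> {1..N}"
  unfolding is_partition_def by (auto simp: Suc_le_eq)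

lemma strict_shifted_count_le:
  assumes px: "is_partition x" and py: "is_partition y" and ss: "strict_shifted x y"
  shows "length (filter (\<lambda>z. v \<le> z) y) \<le> count_above x v"
proof (cases "length (filter (\<lambda>z. v \<le> z) y) = 0")
  case False
  define k where "k = length (filter (\<lambda>z. v \<le> z) y)"
  have k: "1 \<le> k" "k \<le> length y" using False unfolding k_def by (simp_all add: Suc_le_eq)
  have sy: "sorted_wrt (\<ge>) y" and sx: "sorted_wrt (\<ge>) x"
    using px py by (simp_all add: is_partition_def)
  have "k - 1 < length y" using k by simp
  from sorted_desc_nth_iff[OF sy this, of "\<lambda>z. v \<le> z"] have "v \<le> y ! (k - 1)"
    using k unfolding k_def[symmetric] by simp
  moreover have "part y k = y ! (k - 1)" using k by (rule part_nth)
  moreover have "part x (k + 1) > part y k" using ss k unfolding strict_shifted_def by simp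
  ultimately have "v < part x (k + 1)" by simp
  then have xl: "k + 1 \<le> length x" and xk: "v < tl x ! (k - 1)"
    using part_pos[of x "k + 1"] k by (auto simp: nth_tl)
  moreover have "sorted_wrt (\<ge>) (tl x)" using sx by (cases x) auto
  ultimately have "k - 1 < count_above x v"
    unfolding count_above_def using sorted_desc_nth_iff[of "tl x" "k - 1" "\<lambda>z. v < z"] k by auto
  then show ?thesis using k k_def by simp
qed simp

lemma count_le_strict_shifted:
  assumes px: "is_partition x" and py: "is_partition y" and ne: "x \<noteq> []"
    and le: "\<And>v. 1 \<le> v \<Longrightarrow> length (filter (\<lambda>z. v \<le> z) y) \<le> count_above x v"
  shows "strict_shifted x y"
proof -
  have sy: "sorted_wrt (\<ge>) y" using py by (simp add: is_partition_def)
  have stx: "sorted_wrt (\<ge>) (tl x)" using partition_facts(2)[OF px ne] .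
  have shifted: "i < length x \<and> part x (i + 1) > part y i" if i: "1 \<le> i" "i \<le> length y" for i
  proof -
    define t where "t = y ! (i - 1)"
    have "1 \<le> t" using py i unfolding t_def is_partition_def by (auto simp: Suc_le_eq)
    moreover have "i - 1 < length (filter (\<lambda>z. t \<le> z) y)"
      using sorted_desc_nth_iff[of y "i - 1" "\<lambda>z. t \<le> z"] sy i t_def by simp
    ultimately have lt: "i - 1 < count_above x t" using le[of t] by linarith
    then have il: "i - 1 < length (tl x)"
      unfolding count_above_def using length_filter_le[of "\<lambda>z. t < z" "tl x"] by linarith
    have "t < tl x ! (i - 1)"
      using sorted_desc_nth_iff[of "tl x" "i - 1" "\<lambda>z. t < z"] stx il lt
      unfolding count_above_def by simp
    moreover have "part x (i + 1) = tl x ! (i - 1)" using part_nth[of "i + 1" x] il i by (simp add: nth_tl)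
    moreover have "part y i = t" unfolding t_def using i by (rule part_nth)
    ultimately show ?thesis using il i by simp
  qed
  have "length x > length y"
    using ne shifted[of "length y"] by (cases "y = []") (auto simp: Suc_le_eq)
  then show ?thesis unfolding strict_shifted_def using shifted by simp
qed

lemma count_le_iff_dominates_at:
  fixes N v :: nat
  assumes x: "set (tl x) \<subseteq> {1..N}" and y: "set y \<subseteq> {1..N}" and v: "1 \<le> v"
  defines "A \<equiv> count (mset (tl x))" and "B \<equiv> count (mset y)"
  shows "length (filter (\<lambda>z. v \<le> z) y) \<le> count_above x v \<longleftrightarrow>
    (\<Sum>w\<in>{1..v}. A w) + (\<Sum>w\<in>{1..N}. B w) \<le> (\<Sum>w\<in>{1..N}. A w) + (\<Sum>w\<in>{1..v-1}. B w)"
proof -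
  have y_split: "length (filter (\<lambda>z. v \<le> z) y) + length (filter (\<lambda>z. z \<le> v - 1) y) = length y"
  proof -
    have "filter (\<lambda>z. \<not> v \<le> z) y = filter (\<lambda>z. z \<le> v - 1) y" using v by (intro filter_cong) auto
    then show ?thesis using sum_length_filter_compl[of "\<lambda>z. v \<le> z" y] by simp
  qed
  have x_split: "count_above x v + length (filter (\<lambda>z. z \<le> v) (tl x)) = length (tl x)"
  proof -
    have "filter (\<lambda>z. \<not> v < z) (tl x) = filter (\<lambda>z. z \<le> v) (tl x)" by (intro filter_cong) auto
    then show ?thesis using sum_length_filter_compl[of "\<lambda>z. v < z" "tl x"]
      unfolding count_above_def by simp
  qed
  have "\<forall>z\<in>set (tl x). 0 < z" "\<forall>z\<in>set y. 0 < z" using x y by auto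
  then have "length (filter (\<lambda>z. z \<le> v) (tl x)) = (\<Sum>w\<in>{1..v}. A w)"
    and "length (filter (\<lambda>z. z \<le> v - 1) y) = (\<Sum>w\<in>{1..v-1}. B w)"
    unfolding A_def B_def by (simp_all add: length_filter_le_eq_sum_count)
  moreover have "length (tl x) = (\<Sum>w\<in>{1..N}. A w)" "length y = (\<Sum>w\<in>{1..N}. B w)"
    unfolding A_def B_def using length_eq_sum_count[OF x] length_eq_sum_count[OF y] by simp_all
  ultimately show ?thesis using y_split x_split by linarith
qed

lemma strict_shifted_range:
  assumes px: "is_partition x" and py: "is_partition y" and ss: "strict_shifted x y"
  shows "set y \<subseteq> {1..hd x}"
proof -
  have ne: "x \<noteq> []" using ss unfolding strict_shifted_def by auto
  have "z \<le> hd x" if z: "z \<in> set y" for z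
  proof (rule ccontr)
    assume "\<not> z \<le> hd x"
    then have "count_above x z = 0"
      using partition_facts(3)[OF px ne] unfolding count_above_def by (auto simp: filter_empty_conv)
    moreover have "filter (\<lambda>w. z \<le> w) y \<noteq> []" using z by (auto simp: filter_empty_conv)
    ultimately show False using strict_shifted_count_le[OF px py ss, of z] by simp
  qed
  then show ?thesis using partition_range[OF py] by blast
qed

theorem strict_shifted_iff_dominates:
  assumes px: "is_partition x" and py: "is_partition y" and ne: "x \<noteq> []"
    and range: "set y \<subseteq> {1..hd x}"
  shows "strict_shifted x y \<longleftrightarrow> shift_dominates (count (mset (tl x))) (count (mset y)) (hd x)"
proof
  assume "strict_shifted x y"
  then show "shift_dominates (count (mset (tl x))) (count (mset y)) (hd x)"
    unfolding shift_dominates_def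
    using strict_shifted_count_le[OF px py] count_le_iff_dominates_at[OF partition_facts(3)[OF px ne] range]
    by blast
next
  assume dom: "shift_dominates (count (mset (tl x))) (count (mset y)) (hd x)"
  show "strict_shifted x y"
  proof (rule count_le_strict_shifted[OF px py ne])
    fix v :: nat assume v: "1 \<le> v"
    show "length (filter (\<lambda>z. v \<le> z) y) \<le> count_above x v"
    proof (cases "v \<le> hd x")
      case True
      then show ?thesis using dom v count_le_iff_dominates_at[OF partition_facts(3)[OF px ne] range v]
        unfolding shift_dominates_def by blast
    next
      case False
      then have "filter (\<lambda>z. v \<le> z) y = []" using range by (auto simp: filter_empty_conv)
      then show ?thesis by simp
    qed
  qed
qed

lemma balanced_parts_greedy:
  assumes pa: "is_partition al" and pb: "is_partition be"
  shows "balanced_parts al be = marked be (greedy_flags (count_above al) be 0)"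
    and "unbalanced_parts al be = unmarked be (greedy_flags (count_above al) be 0)"
proof -
  have "balanced_flags al be = greedy_flags (count_above al) be 0"
    unfolding balanced_flags_def
    using pa pb by (intro balflags_eq_greedy_flags) (auto simp: is_partition_def)
  then show "balanced_parts al be = marked be (greedy_flags (count_above al) be 0)"
    and "unbalanced_parts al be = unmarked be (greedy_flags (count_above al) be 0)"
    unfolding balanced_parts_def unbalanced_parts_def marked_def unmarked_def by simp_all
qed

theorem count_balanced_parts:
  assumes pa: "is_partition al" and pb: "is_partition be" and ne: "al \<noteq> []"
    and range: "set be \<subseteq> {1..hd al}"
  shows "count (mset (balanced_parts al be)) v
       = level_bal (count (mset (tl al))) (count (mset be)) (hd al) 0 v"
proof -
  have top: "count_above al (hd al) = 0"
    using partition_facts(3)[OF pa ne] unfolding count_above_def by (auto simp: filter_empty_conv)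
  have step: "\<forall>v < hd al. count_above al v = count_above al (Suc v) + count (mset (tl al)) (Suc v)"
    using count_above_Suc by blast
  have "sorted_wrt (\<ge>) be" using pb by (simp add: is_partition_def)
  from count_marked_greedy_flags[OF step this range, of 0 "count (mset be)"] top
  show ?thesis unfolding balanced_parts_greedy(1)[OF pa pb] by simp
qed

lemma bal_map_image:
  assumes pa: "is_partition al" and pb: "is_partition be" and ne: "al \<noteq> []"
    and range: "set be \<subseteq> {1..hd al}" and xy: "bal_map (al, be) = (x, y)"
  defines "f \<equiv> level_bal (count (mset (tl al))) (count (mset be)) (hd al) 0"
  shows "is_partition x" "is_partition y" "x \<noteq> []" "hd x = hd al"
    "set (tl x) \<subseteq> {1..hd al}" "set y \<subseteq> {1..hd al}"
    "\<And>v. count (mset (tl x)) v = count (mset (tl al)) v + f v"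
    "\<And>v. count (mset y) v + f v = count (mset be) v"
    "mset x + mset y = mset al + mset be"
    "num_balanced al be = (\<Sum>w\<in>{1..hd al}. f w)"
    "length y + num_balanced al be = length be"
proof -
  note al = partition_facts[OF pa ne]
  define N where "N = hd al"
  define bp where "bp = balanced_parts al be"
  have x: "x = rev (sort (al @ bp))" and y: "y = unmarked be (greedy_flags (count_above al) be 0)"
    using xy balanced_parts_greedy(2)[OF pa pb] unfolding bal_map_def bp_def by auto
  have bp: "bp = marked be (greedy_flags (count_above al) be 0)"
    unfolding bp_def by (rule balanced_parts_greedy(1)[OF pa pb])
  have count_bp: "count (mset bp) v = f v" for v
    unfolding bp_def f_def by (rule count_balanced_parts[OF pa pb ne range])
  have split: "mset bp + mset y = mset be"
    unfolding bp y by (rule mset_marked_unmarked) simp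
  have set_bp: "set bp \<subseteq> set be" and set_y: "set y \<subseteq> set be"
    unfolding bp y by (rule set_marked, rule set_unmarked)
  show "is_partition y"
    using sorted_unmarked[of "(\<ge>)" be] set_y pb unfolding y is_partition_def by auto
  show "set y \<subseteq> {1..hd al}" using set_y range by auto
  have mx: "mset x = mset al + mset bp" unfolding x by simp
  have sx: "sorted_wrt (\<ge>) x" unfolding x by (simp add: sorted_wrt_rev)
  have set_x: "set x = set al \<union> set bp" using mx by (metis set_mset_mset set_mset_union)
  have x_bounds: "\<forall>z\<in>set x. 1 \<le> z \<and> z \<le> N" using set_x al(4) set_bp range N_def by auto
  show "is_partition x" using sx x_bounds unfolding is_partition_def by auto
  have N_in: "N \<in> set x" using set_x al(1) N_def by (metis UnI1 list.set_intros(1))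
  show x_ne: "x \<noteq> []" using N_in by auto
  have hx: "hd x = N"
  proof (rule antisym)
    show "hd x \<le> N" using x_bounds x_ne by simp
    have "\<forall>z\<in>set (tl x). z \<le> hd x" using sx x_ne by (metis list.collapse sorted_wrt.simps(2))
    then show "N \<le> hd x" using N_in x_ne by (metis list.collapse order_refl set_ConsD)
  qed
  then show "hd x = hd al" using N_def by simp
  have "mset x = add_mset N (mset (tl x))" using x_ne hx by (metis list.collapse mset.simps(2))
  moreover have "mset al = add_mset N (mset (tl al))" using al(1) N_def by (metis mset.simps(2))
  ultimately have "mset (tl x) = mset (tl al) + mset bp" using mx by simp
  then show "count (mset (tl x)) v = count (mset (tl al)) v + f v" for v using count_bp by simp
  show "count (mset y) v + f v = count (mset be) v" for v using split count_bp
    by (metis count_union add.commute)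
  show "mset x + mset y = mset al + mset be" using mx split by (simp add: add.assoc)
  show "set (tl x) \<subseteq> {1..hd al}" using x_bounds hx N_def list.set_sel(2)[OF x_ne] by auto
  have "num_balanced al be = length bp" unfolding num_balanced_def bp_def ..
  also have "\<dots> = (\<Sum>w\<in>{1..N}. count (mset bp) w)" using set_bp range N_def by (intro length_eq_sum_count) auto
  finally show "num_balanced al be = (\<Sum>w\<in>{1..hd al}. f w)" using count_bp N_def by simp
  show "length y + num_balanced al be = length be"
    using arg_cong[OF split, of size] unfolding num_balanced_def bp_def by simp
qed

lemma bal_map_level_chain:
  assumes pa: "is_partition al" and pb: "is_partition be" and ne: "al \<noteq> []"
    and range: "set be \<subseteq> {1..hd al}" and xy: "bal_map (al, be) = (x, y)"
  defines "a \<equiv> count (mset (tl al))" and "b \<equiv> count (mset be)"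
  shows "level_chain (count (mset (tl x))) (count (mset y)) (level_bal a b (hd al) 0) (level_gap a b (hd al) 0) (hd al)"
    and "level_gap a b (hd al) 0 (hd al) = 0"
proof -
  note image = bal_map_image[OF pa pb ne range xy, folded a_def b_def]
  have "count (mset y) v = b v - level_bal a b (hd al) 0 v" for v
    using image(8)[of v] unfolding b_def by linarith
  then have "count (mset (tl x)) = (\<lambda>v. a v + level_bal a b (hd al) 0 v)"
    and "count (mset y) = (\<lambda>v. b v - level_bal a b (hd al) 0 v)"
    using image(7) by (auto simp: fun_eq_iff)
  then show "level_chain (count (mset (tl x))) (count (mset y)) (level_bal a b (hd al) 0) (level_gap a b (hd al) 0) (hd al)"
    using level_chain_level_bal by simp
  show "level_gap a b (hd al) 0 (hd al) = 0" by (rule level_gap_top)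
qed

lemma bal_map_reconstruct:
  assumes pa: "is_partition al" and pb: "is_partition be" and ne: "al \<noteq> []"
    and range: "set be \<subseteq> {1..hd al}" and xy: "bal_map (al, be) = (x, y)"
  defines "f \<equiv> level_bal (count (mset (tl al))) (count (mset be)) (hd al) 0"
  shows "al = hd x # desc_of_counts (\<lambda>v. count (mset (tl x)) v - f v) (hd x)"
    and "be = desc_of_counts (\<lambda>v. count (mset y) v + f v) (hd x)"
proof -
  note image = bal_map_image[OF pa pb ne range xy, folded f_def]
  note al = partition_facts[OF pa ne]
  have "tl al = desc_of_counts (\<lambda>v. count (mset (tl x)) v - f v) (hd al)"
    using al(2) sorted_desc_of_counts al(3) set_desc_of_counts
    by (rule sorted_desc_eq_if_counts_eq) (simp add: count_desc_of_counts image(7))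
  then show "al = hd x # desc_of_counts (\<lambda>v. count (mset (tl x)) v - f v) (hd x)"
    using al(1) image(4) by simp
  have "sorted_wrt (\<ge>) be" using pb by (simp add: is_partition_def)
  then have "be = desc_of_counts (\<lambda>v. count (mset y) v + f v) (hd al)"
    using sorted_desc_of_counts range set_desc_of_counts
    by (rule sorted_desc_eq_if_counts_eq) (simp add: count_desc_of_counts image(8))
  then show "be = desc_of_counts (\<lambda>v. count (mset y) v + f v) (hd x)" using image(4) by simp
qed

lemma bal_map_preimage:
  fixes x y :: "nat list" and f g :: "nat \<Rightarrow> nat"
  defines "N \<equiv> hd x" and "A \<equiv> count (mset (tl x))" and "B \<equiv> count (mset y)"
  assumes px: "is_partition x" and py: "is_partition y" and ne: "x \<noteq> []"
    and range: "set y \<subseteq> {1..N}" and chain: "level_chain A B f g N" and top: "g N = 0"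
  defines "al \<equiv> N # desc_of_counts (\<lambda>v. A v - f v) N"
    and "be \<equiv> desc_of_counts (\<lambda>v. B v + f v) N"
  shows "is_partition al" "is_partition be" "al \<noteq> []" "set be \<subseteq> {1..hd al}"
    "bal_map (al, be) = (x, y)" "num_balanced al be = (\<Sum>w\<in>{1..N}. f w)"
proof -
  note x = partition_facts[OF px ne, folded N_def]
  have f_le: "f v \<le> A v" if "1 \<le> v" "v \<le> N" for v
    using chain that unfolding level_chain_def level_step_def by fastforce
  have N1: "1 \<le> N" using x(1,4) by (metis list.set_intros(1))
  have desc: "sorted_wrt (\<ge>) (desc_of_counts c N)" "\<forall>z\<in>set (desc_of_counts c N). 1 \<le> z \<and> z \<le> N"
    for c using sorted_desc_of_counts set_desc_of_counts[of c N] by auto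
  show pal: "is_partition al" and pbe: "is_partition be" and al_ne: "al \<noteq> []"
    and be_range: "set be \<subseteq> {1..hd al}"
    unfolding al_def be_def is_partition_def using desc N1 by (auto simp: Suc_le_eq)
  obtain x' y' where xy': "bal_map (al, be) = (x', y')" by fastforce
  note image = bal_map_image[OF pal pbe al_ne be_range xy']
  have "level_bal (count (mset (tl al))) (count (mset be)) (hd al) 0
      = level_bal (\<lambda>v. A v - f v) (\<lambda>v. B v + f v) N 0"
    unfolding al_def be_def list.sel by (rule level_bal_cong) (simp add: count_desc_of_counts)
  then have f': "level_bal (count (mset (tl al))) (count (mset be)) (hd al) 0 v
      = (if 1 \<le> v \<and> v \<le> N then f v else 0)" for v
    using level_chain_level_bal_eq[OF chain, of v] top level_bal_outside[of v N] by auto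
  have "count (mset (tl x')) v = A v" if "1 \<le> v" "v \<le> N" for v
    using image(7)[of v] f'[of v] f_le[OF that] that unfolding al_def by (simp add: count_desc_of_counts)
  then have "tl x' = tl x"
    using partition_facts(2)[OF image(1,3)] x(2) image(5) x(3)
    unfolding A_def al_def by (intro sorted_desc_eq_if_counts_eq) simp_all
  then have "x' = x" using image(3,4) x(1) unfolding al_def by (metis list.collapse list.sel(1))
  moreover have "count (mset y') v = B v" if "1 \<le> v" "v \<le> N" for v
    using image(8)[of v] f'[of v] that unfolding be_def by (simp add: count_desc_of_counts)
  then have "y' = y"
    using image(2) py image(6) range unfolding B_def al_def is_partition_def
    by (intro sorted_desc_eq_if_counts_eq) simp_all
  ultimately show "bal_map (al, be) = (x, y)" using xy' by simp
  show "num_balanced al be = (\<Sum>w\<in>{1..N}. f w)"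
    using image(10) f' unfolding al_def by simp
qed

lemma setA_facts:
  assumes "(al, be) \<in> setA r m n"
  shows "is_partition al" "is_partition be" "al \<noteq> []" "set be \<subseteq> {1..hd al}"
    "sum_list al + sum_list be = n" "length al = length be + m" "num_balanced al be = r"
  using assms partition_range[of be "hd al"] unfolding setA_def by auto

lemma bal_map_into:
  assumes A: "(al, be) \<in> setA r m n"
  shows "bal_map (al, be) \<in> setB r m n"
proof -
  obtain x y where xy: "bal_map (al, be) = (x, y)" by fastforce
  note al = setA_facts[OF A]
  note image = bal_map_image[OF al(1-4) xy]
  note chain = bal_map_level_chain[OF al(1-4) xy]
  have "shift_dominates (count (mset (tl x))) (count (mset y)) (hd x)"
    using level_chain_dominates[OF chain] image(4) by simp
  then have "strict_shifted x y"
    using strict_shifted_iff_dominates[OF image(1-3)] image(4,6) by simp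
  moreover have "length x + length y = length al + length be" using arg_cong[OF image(9), of size] by simp
  ultimately show ?thesis
    unfolding xy setB_def using image(1,2,11) sum_list_eq_if_mset_eq[OF image(9)] al(5-7) by auto
qed

(* Injectivity: both preimages give level chains for the same image multiplicities,
   with equal totals r and top gap 0, hence equal bottom gaps, hence equal f. *)
lemma bal_map_inj:
  assumes A1: "(al1, be1) \<in> setA r m n" and A2: "(al2, be2) \<in> setA r m n"
    and eq: "bal_map (al1, be1) = bal_map (al2, be2)"
  shows "(al1, be1) = (al2, be2)"
proof -
  obtain x y where xy1: "bal_map (al1, be1) = (x, y)" by fastforce
  with eq have xy2: "bal_map (al2, be2) = (x, y)" by simp
  note A1 = setA_facts[OF A1] and A2 = setA_facts[OF A2]
  define N where "N = hd x"
  define f1 where "f1 = level_bal (count (mset (tl al1))) (count (mset be1)) (hd al1) 0"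
  define f2 where "f2 = level_bal (count (mset (tl al2))) (count (mset be2)) (hd al2) 0"
  note image1 = bal_map_image[OF A1(1-4) xy1, folded f1_def]
  note image2 = bal_map_image[OF A2(1-4) xy2, folded f2_def]
  note chain1 = bal_map_level_chain[OF A1(1-4) xy1, folded f1_def, unfolded image1(4)[symmetric, folded N_def]]
  note chain2 = bal_map_level_chain[OF A2(1-4) xy2, folded f2_def, unfolded image2(4)[symmetric, folded N_def]]
  have "(\<Sum>w\<in>{1..N}. f1 w) = r" "(\<Sum>w\<in>{1..N}. f2 w) = r"
    using image1(4,10) image2(4,10) A1(7) A2(7) N_def by simp_all
  then have bottom: "level_gap (count (mset (tl al1))) (count (mset be1)) N 0 0
      = level_gap (count (mset (tl al2))) (count (mset be2)) N 0 0"
    using level_chain_sum[OF chain1(1) le_refl] level_chain_sum[OF chain2(1) le_refl]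
      chain1(2) chain2(2) by linarith
  have f_eq: "f1 v = f2 v" if "1 \<le> v" "v \<le> N" for v
    by (rule level_chain_unique[OF chain1(1) chain2(1) bottom that])
  have "desc_of_counts (\<lambda>v. count (mset (tl x)) v - f1 v) N
      = desc_of_counts (\<lambda>v. count (mset (tl x)) v - f2 v) N"
    and "desc_of_counts (\<lambda>v. count (mset y) v + f1 v) N = desc_of_counts (\<lambda>v. count (mset y) v + f2 v) N"
    by (rule desc_of_counts_cong, simp add: f_eq)+
  then show ?thesis
    using bal_map_reconstruct[OF A1(1-4) xy1, folded f1_def N_def]
      bal_map_reconstruct[OF A2(1-4) xy2, folded f2_def N_def] by simp
qed

(* Surjectivity: build the level chain upwards from the bottom gap m + r - 1, which the
   lengths force, and read off the preimage. *)
lemma bal_map_onto: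
  assumes B: "(x, y) \<in> setB r m n"
  shows "\<exists>p\<in>setA r m n. bal_map p = (x, y)"
proof -
  from B have px: "is_partition x" and py: "is_partition y" and ss: "strict_shifted x y"
    and sum: "sum_list x + sum_list y = n" and len: "length x = length y + m + 2 * r"
    unfolding setB_def by auto
  have ne: "x \<noteq> []" using ss unfolding strict_shifted_def by auto
  define N A B where "N = hd x" and "A = count (mset (tl x))" and "B = count (mset y)"
  have range: "set y \<subseteq> {1..N}" unfolding N_def by (rule strict_shifted_range[OF px py ss])
  have dom: "shift_dominates A B N"
    using strict_shifted_iff_dominates[OF px py ne range[unfolded N_def]] ss
    unfolding A_def B_def N_def by simp
  define h0 where "h0 = m + r - 1"
  define f g where "f = bal_up A B h0" and "g = gap_up A B h0"
  have chain: "level_chain A B f g N" unfolding f_def g_def by (rule level_chain_gap_up)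
  have "length (tl x) = (\<Sum>w\<in>{1..N}. A w)" "length y = (\<Sum>w\<in>{1..N}. B w)"
    unfolding A_def B_def N_def
    by (rule length_eq_sum_count[OF partition_facts(3)[OF px ne]],
        rule length_eq_sum_count[OF range[unfolded N_def]])
  moreover have "length y < length x" using ss unfolding strict_shifted_def by simp
  moreover have "length (tl x) = length x - 1" by simp
  ultimately have "g 0 + (\<Sum>w\<in>{1..N}. B w) + r = (\<Sum>w\<in>{1..N}. A w)"
    unfolding g_def h0_def gap_up.simps(1) using len by linarith
  note closes = level_chain_closes[OF chain dom this]
  define al be where "al = N # desc_of_counts (\<lambda>v. A v - f v) N"
    and "be = desc_of_counts (\<lambda>v. B v + f v) N"
  note pre = bal_map_preimage[OF px py ne range[unfolded N_def] chain[unfolded N_def A_def B_def]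
      closes(2)[unfolded N_def], folded N_def A_def B_def, folded al_def be_def]
  note image = bal_map_image[OF pre(1-5)]
  have "length x + length y = length al + length be" using arg_cong[OF image(9), of size] by simp
  moreover have "length y + r = length be" using image(11) pre(6) closes(1) by simp
  moreover have "sum_list al + sum_list be = n" using sum_list_eq_if_mset_eq[OF image(9)] sum by simp
  ultimately have "(al, be) \<in> setA r m n"
    unfolding setA_def using pre(1-4,6) closes(1) len by auto
  then show ?thesis using pre(5) by blast
qed

theorem mainTheorem5:
  fixes r m n :: nat
  shows "bij_betw bal_map (setA r m n) (setB r m n)"
proof (rule bij_betw_imageI)
  show "inj_on bal_map (setA r m n)"
    unfolding inj_on_def using bal_map_inj by (metis surj_pair)
  show "bal_map ` setA r m n = setB r m n"
  proof
    show "bal_map ` setA r m n \<subseteq> setB r m n" using bal_map_into by auto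
    show "setB r m n \<subseteq> bal_map ` setA r m n"
    proof
      fix p assume "p \<in> setB r m n"
      then have "\<exists>q\<in>setA r m n. bal_map q = p" using bal_map_onto[of "fst p" "snd p"] by simp
      then show "p \<in> bal_map ` setA r m n" by blast
    qed
  qed
qed

end
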